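(* Let $\pi_1,\pi_2\in\mathcal{P}(\mathcal{X})$ and $M\ge1$. Then for every $\mu_1\in\mathcal{N}(\pi_1,M)$ there exists $\mu_2\in\mathcal{N}(\pi_2,M)$ such that $\|\mu_1-\mu_2\|_{TV}\le M\|\pi_1-\pi_2\|_{TV}$.
   Context: $\mathcal{P}(\mathcal{X})$ is the set of probability distributions on a measurable space $\mathcal{X}$; $\|\mu-\nu\|_{TV}=\sup_A|\mu(A)-\nu(A)|$; $\mathcal{N}(\pi,M)=\{\mu\in\mathcal{P}(\mathcal{X}):\mu(A)\le M\pi(A)\text{ for all measurable }A\}$. *)

theory Defs
  imports "HOL-Probability.Probability"
begin

text \<open>The measurable space \<open>\<X>\<close> is represented by a measure \<open>X\<close>; only its
  space and sigma-algebra are used.\<close>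

definition prob_measures :: "'a measure \<Rightarrow> 'a measure set" where
  "prob_measures X = {\<mu>. prob_space \<mu> \<and> sets \<mu> = sets X}"

definition tv_dist :: "'a measure \<Rightarrow> 'a measure \<Rightarrow> 'a measure \<Rightarrow> real" where
  "tv_dist X \<mu> \<nu> = (SUP A \<in> sets X. \<bar>measure \<mu> A - measure \<nu> A\<bar>)"

definition N_set :: "'a measure \<Rightarrow> 'a measure \<Rightarrow> real \<Rightarrow> 'a measure set" where
  "N_set X \<pi> M = {\<mu> \<in> prob_measures X. \<forall>A \<in> sets X. measure \<mu> A \<le> M * measure \<pi> A}"

end

theory Submission
  imports Defs
begin

text \<open>Dominate \<open>\<mu>1\<close> and \<open>\<pi>2\<close> by a common finite measure and take their densities
  \<open>m\<close> and \<open>p\<close>. Since \<open>\<integral> min m (M p) \<le> 1 \<le> \<integral> M p\<close>, there is a probability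
  density \<open>m2\<close> with \<open>min m (M p) \<le> m2 \<le> M p\<close>; it defines \<open>\<mu>2 \<in> \<N>(\<pi>2, M)\<close>. As \<open>m\<close>
  and \<open>m2\<close> both dominate \<open>min m (M p)\<close>, the total variation distance of \<open>\<mu>1\<close> and
  \<open>\<mu>2\<close> is at most \<open>\<integral> (m - M p)\<^sup>+ = \<mu>1 B - M \<pi>2 B\<close> with \<open>B = {m > M p}\<close>, and
  \<open>\<mu>1 B \<le> M \<pi>1 B\<close> bounds this by \<open>M (\<pi>1 B - \<pi>2 B) \<le> M \<parallel>\<pi>1 - \<pi>2\<parallel>\<close>.\<close>

lemma finite_measure_sup_measure':
  assumes "finite_measure A" "finite_measure B" "sets B = sets A"
  shows "finite_measure (sup_measure' A B)"
proof (rule finite_measureI)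
  have "emeasure (sup_measure' A B) (space A) \<le> emeasure A (space A) + emeasure B (space A)"
    unfolding emeasure_sup_measure'[OF assms(3) sets.top]
    by (intro SUP_least add_mono emeasure_mono) (auto simp: assms(3) dest: sets.sets_into_space)
  also have "\<dots> < \<infinity>"
    using assms sets_eq_imp_space_eq[OF assms(3)]
    by (simp add: finite_measure.emeasure_finite less_top[symmetric])
  finally show "emeasure (sup_measure' A B) (space (sup_measure' A B)) \<noteq> \<infinity>"
    using assms(3) by simp
qed

lemma absolutely_continuous_sup_measure':
  assumes "sets B = sets A"
  shows "absolutely_continuous (sup_measure' A B) A"
    and "absolutely_continuous (sup_measure' A B) B"
  using le_emeasure_sup_measure'1[OF assms] le_emeasure_sup_measure'2[OF assms] assms
  by (auto simp: absolutely_continuous_def null_sets_def) (metis le_zero_eq)+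

lemma (in finite_measure) finite_measure_eq_real_density:
  assumes "finite_measure N" "absolutely_continuous M N" "sets N = sets M"
  obtains D where "integrable M D" "\<And>x. 0 \<le> D x" "density M (\<lambda>x. ennreal (D x)) = N"
proof -
  obtain D where D[measurable]: "D \<in> borel_measurable M" and
      RN_eq: "AE x in M. RN_deriv M N x = ennreal (D x)" and D_nonneg: "\<And>x. 0 \<le> D x"
    using real_RN_deriv[OF assms] by blast
  have "density M (\<lambda>x. ennreal (D x)) = density M (RN_deriv M N)"
    using RN_eq by (intro density_cong) (auto elim: eventually_mono)
  also have "\<dots> = N"
    using assms(2,3) by (rule density_RN_deriv)
  finally have density_eq: "density M (\<lambda>x. ennreal (D x)) = N" .
  have "(\<integral>\<^sup>+x. D x \<partial>M) = emeasure N (space N)"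
    using density_eq[symmetric] by (simp add: emeasure_density nn_integral_set_ennreal)
  then have "integrable M D"
    using finite_measure.emeasure_finite[OF assms(1)] D_nonneg
    by (intro integrableI_nonneg) (auto simp: less_top)
  with D_nonneg density_eq that show ?thesis by blast
qed

lemma common_dominating_real_densities:
  assumes "finite_measure \<mu>" "finite_measure \<nu>" "sets \<nu> = sets \<mu>"
  obtains R and m p :: "'a \<Rightarrow> real"
  where "sets R = sets \<mu>" "integrable R m" "integrable R p" "\<And>x. 0 \<le> m x" "\<And>x. 0 \<le> p x"
    "density R m = \<mu>" "density R p = \<nu>"
proof -
  interpret R: finite_measure "sup_measure' \<mu> \<nu>"
    using assms by (rule finite_measure_sup_measure')
  obtain m where "integrable (sup_measure' \<mu> \<nu>) m" "\<And>x. 0 \<le> m x" "density (sup_measure' \<mu> \<nu>) m = \<mu>"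
    using R.finite_measure_eq_real_density[OF assms(1) absolutely_continuous_sup_measure'(1)[OF assms(3)]]
      assms(3) by auto
  moreover obtain p where "integrable (sup_measure' \<mu> \<nu>) p" "\<And>x. 0 \<le> p x" "density (sup_measure' \<mu> \<nu>) p = \<nu>"
    using R.finite_measure_eq_real_density[OF assms(2) absolutely_continuous_sup_measure'(2)[OF assms(3)]]
      assms(3) by auto
  ultimately show ?thesis
    using that sets_sup_measure'[OF assms(3)] by blast
qed

lemma measure_density_eq_set_integral:
  fixes f :: "'a \<Rightarrow> real"
  assumes "f \<in> borel_measurable M" "\<And>x. 0 \<le> f x" "A \<in> sets M"
  shows "measure (density M f) A = (LINT x:A|M. f x)"
proof -
  have "measure (density M f) A = integral\<^sup>L (density M f) (indicator A)"
    using sets.sets_into_space[OF assms(3)] by (simp add: Int_absorb2)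
  also have "\<dots> = (LINT x:A|M. f x)"
    using assms unfolding set_lebesgue_integral_def
    by (subst integral_density) (auto simp: mult.commute)
  finally show ?thesis .
qed

lemma integral_eq_measure_density:
  fixes f :: "'a \<Rightarrow> real"
  assumes "f \<in> borel_measurable M" "\<And>x. 0 \<le> f x"
  shows "integral\<^sup>L M f = measure (density M f) (space M)"
proof -
  have "integral\<^sup>L M f = (LINT x:space M|M. f x)"
    unfolding set_lebesgue_integral_def by (intro Bochner_Integration.integral_cong) auto
  then show ?thesis
    using measure_density_eq_set_integral[OF assms sets.top] by simp
qed

lemma exists_integrable_between:
  fixes g u :: "'a \<Rightarrow> real"
  assumes "integrable M g" "integrable M u" "\<And>x. g x \<le> u x"
    and "integral\<^sup>L M g \<le> t" "t \<le> integral\<^sup>L M u"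
  obtains f where "integrable M f" "\<And>x. g x \<le> f x" "\<And>x. f x \<le> u x" "integral\<^sup>L M f = t"
proof -
  \<comment> \<open>if the denominator vanishes, so does the numerator, and \<open>c = 0\<close> since \<open>x / 0 = 0\<close>\<close>
  define c where "c = (t - integral\<^sup>L M g) / (integral\<^sup>L M u - integral\<^sup>L M g)"
  have c: "0 \<le> c" "c \<le> 1" "c * (integral\<^sup>L M u - integral\<^sup>L M g) = t - integral\<^sup>L M g"
    using assms(4,5) by (auto simp: c_def divide_le_eq_1)
  define f where "f x = g x + c * (u x - g x)" for x
  have "integrable M f"
    unfolding f_def using assms(1,2) by simp
  moreover have "g x \<le> f x" "f x \<le> u x" for x
    using c(1,2) assms(3)[of x] mult_left_le_one_le[of "u x - g x" c] by (auto simp: f_def)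
  moreover have "integral\<^sup>L M f = t"
    unfolding f_def using assms(1,2) c(3) by simp
  ultimately show ?thesis
    using that by blast
qed

lemma set_integral_diff_le_of_common_minorant:
  fixes f1 f2 g :: "'a \<Rightarrow> real"
  assumes "integrable M f1" "integrable M f2" "integrable M g"
    and "\<And>x. g x \<le> f1 x" "\<And>x. g x \<le> f2 x" "A \<in> sets M"
  shows "(LINT x:A|M. f1 x) - (LINT x:A|M. f2 x) \<le> integral\<^sup>L M f1 - integral\<^sup>L M g"
proof -
  have set_int: "set_integrable M A h" if "integrable M h" for h :: "'a \<Rightarrow> real"
    unfolding set_integrable_def using assms(6) that by (rule integrable_mult_indicator)
  have "(LINT x:A|M. f1 x) - (LINT x:A|M. f2 x) \<le> (LINT x:A|M. f1 x - g x)"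
    using set_int[OF assms(1)] set_int[OF assms(2)] set_int[OF assms(3)] assms(5)
    by (simp add: set_integral_mono)
  also have "\<dots> \<le> (\<integral>x. f1 x - g x \<partial>M)"
    using set_int[of "\<lambda>x. f1 x - g x"] assms(1,3,4)
    unfolding set_lebesgue_integral_def set_integrable_def
    by (intro integral_mono) (auto split: split_indicator)
  finally show ?thesis
    using assms(1,3) by simp
qed

lemma integral_diff_min_eq_set_integral:
  fixes f g :: "'a \<Rightarrow> real"
  assumes "integrable M f" "integrable M g"
  shows "integral\<^sup>L M f - (\<integral>x. min (f x) (g x) \<partial>M)
    = (LINT x:{x \<in> space M. g x < f x}|M. f x - g x)"
proof -
  have "integral\<^sup>L M f - (\<integral>x. min (f x) (g x) \<partial>M) = (\<integral>x. f x - min (f x) (g x) \<partial>M)"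
    using assms by simp
  also have "\<dots> = (LINT x:{x \<in> space M. g x < f x}|M. f x - g x)"
    unfolding set_lebesgue_integral_def
    by (intro Bochner_Integration.integral_cong) (auto split: split_indicator)
  finally show ?thesis .
qed

lemma tv_dist_le:
  assumes "\<And>A. A \<in> sets X \<Longrightarrow> \<bar>measure \<mu> A - measure \<nu> A\<bar> \<le> e"
  shows "tv_dist X \<mu> \<nu> \<le> e"
  unfolding tv_dist_def using assms by (intro cSUP_least) auto

lemma abs_measure_diff_le_tv_dist:
  assumes "prob_space \<mu>" "prob_space \<nu>" "A \<in> sets X"
  shows "\<bar>measure \<mu> A - measure \<nu> A\<bar> \<le> tv_dist X \<mu> \<nu>"
  unfolding tv_dist_def
proof (rule cSUP_upper[OF assms(3)])
  have "\<bar>measure \<mu> B - measure \<nu> B\<bar> \<le> 1" for B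
    using prob_space.prob_le_1[OF assms(1), of B] prob_space.prob_le_1[OF assms(2), of B]
      measure_nonneg[of \<mu> B] measure_nonneg[of \<nu> B] by linarith
  then show "bdd_above ((\<lambda>B. \<bar>measure \<mu> B - measure \<nu> B\<bar>) ` sets X)"
    by (intro bdd_aboveI2)
qed

lemma tv_dist_density_le:
  fixes f1 f2 g :: "'a \<Rightarrow> real"
  assumes "sets R = sets X" "integrable R f1" "integrable R f2" "integrable R g"
    and "\<And>x. 0 \<le> f1 x" "\<And>x. 0 \<le> f2 x" "\<And>x. g x \<le> f1 x" "\<And>x. g x \<le> f2 x"
    and "integral\<^sup>L R f1 = integral\<^sup>L R f2"
  shows "tv_dist X (density R f1) (density R f2) \<le> integral\<^sup>L R f1 - integral\<^sup>L R g"
proof (rule tv_dist_le)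
  fix A assume "A \<in> sets X"
  then have A: "A \<in> sets R" using assms(1) by simp
  show "\<bar>measure (density R f1) A - measure (density R f2) A\<bar> \<le> integral\<^sup>L R f1 - integral\<^sup>L R g"
    using set_integral_diff_le_of_common_minorant[OF assms(2,3,4,7,8) A]
      set_integral_diff_le_of_common_minorant[OF assms(3,2,4,8,7) A]
      measure_density_eq_set_integral[OF _ assms(5) A] measure_density_eq_set_integral[OF _ assms(6) A]
      assms(2,3,9) by (simp add: abs_le_iff)
qed

lemma density_in_N_set:
  fixes f p :: "'a \<Rightarrow> real"
  assumes "sets R = sets X" "integrable R f" "integrable R p"
    and "\<And>x. 0 \<le> f x" "\<And>x. 0 \<le> p x" "\<And>x. f x \<le> M * p x" "integral\<^sup>L R f = 1"
  shows "density R f \<in> N_set X (density R p) M"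
proof -
  have "emeasure (density R f) (space R) = ennreal (integral\<^sup>L R f)"
    using assms(2,4) by (simp add: emeasure_density nn_integral_eq_integral)
  then have "prob_space (density R f)"
    using assms(7) by (intro prob_spaceI) simp
  moreover have "measure (density R f) A \<le> M * measure (density R p) A" if "A \<in> sets R" for A
  proof -
    have set_int: "set_integrable R A h" if "integrable R h" for h :: "'a \<Rightarrow> real"
      unfolding set_integrable_def using \<open>A \<in> sets R\<close> that by (rule integrable_mult_indicator)
    have "(LINT x:A|R. f x) \<le> (LINT x:A|R. M * p x)"
      using set_int[OF assms(2)] set_int[OF assms(3)] assms(6) by (intro set_integral_mono) auto
    then show ?thesis
      using measure_density_eq_set_integral[OF _ assms(4) that]
        measure_density_eq_set_integral[OF _ assms(5) that] assms(2,3) by simp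
  qed
  ultimately show ?thesis
    using assms(1) by (simp add: N_set_def prob_measures_def)
qed

lemma excess_over_scaled_density_le_tv_dist:
  fixes m p :: "'a \<Rightarrow> real"
  assumes "sets R = sets X" "integrable R m" "integrable R p"
    and "\<And>x. 0 \<le> m x" "\<And>x. 0 \<le> p x" "0 \<le> M"
    and "prob_space \<pi>" "prob_space (density R p)"
    and "\<And>A. A \<in> sets X \<Longrightarrow> measure (density R m) A \<le> M * measure \<pi> A"
  shows "integral\<^sup>L R m - (\<integral>x. min (m x) (M * p x) \<partial>R) \<le> M * tv_dist X \<pi> (density R p)"
proof -
  define B where "B = {x \<in> space R. M * p x < m x}"
  have B: "B \<in> sets R"
    unfolding B_def using assms(2,3) by measurable
  have set_int: "set_integrable R B h" if "integrable R h" for h :: "'a \<Rightarrow> real"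
    unfolding set_integrable_def using B that by (rule integrable_mult_indicator)
  have "integral\<^sup>L R m - (\<integral>x. min (m x) (M * p x) \<partial>R) = (LINT x:B|R. m x - M * p x)"
    unfolding B_def using assms(2,3) by (intro integral_diff_min_eq_set_integral) auto
  also have "\<dots> = measure (density R m) B - M * measure (density R p) B"
    using set_int[OF assms(2)] set_int[OF assms(3)] assms(2,3)
      measure_density_eq_set_integral[OF _ assms(4) B] measure_density_eq_set_integral[OF _ assms(5) B]
    by simp
  also have "\<dots> \<le> M * (measure \<pi> B - measure (density R p) B)"
    using assms(9)[of B] B assms(1) by (simp add: right_diff_distrib)
  also have "\<dots> \<le> M * tv_dist X \<pi> (density R p)"
    using abs_measure_diff_le_tv_dist[OF assms(7,8), of B X] B assms(1,6)
    by (intro mult_left_mono) auto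
  finally show ?thesis .
qed

lemma exists_close_density_in_N_set:
  fixes m p :: "'a \<Rightarrow> real"
  assumes "sets R = sets X" "integrable R m" "integrable R p" "\<And>x. 0 \<le> m x" "\<And>x. 0 \<le> p x"
    and "prob_space (density R m)" "prob_space (density R p)" "prob_space \<pi>" "1 \<le> M"
    and "\<And>A. A \<in> sets X \<Longrightarrow> measure (density R m) A \<le> M * measure \<pi> A"
  shows "\<exists>\<mu> \<in> N_set X (density R p) M. tv_dist X (density R m) \<mu> \<le> M * tv_dist X \<pi> (density R p)"
proof -
  have m_int: "integral\<^sup>L R m = 1" and p_int: "integral\<^sup>L R p = 1"
    using integral_eq_measure_density[of m R] integral_eq_measure_density[of p R] assms(2-7)
    by (metis borel_measurable_integrable prob_space.prob_space space_density)+
  define g where "g x = min (m x) (M * p x)" for x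
  have g: "integrable R g" "\<And>x. 0 \<le> g x" "\<And>x. g x \<le> m x"
    unfolding g_def using assms(2-5,9) by auto
  have "integral\<^sup>L R g \<le> 1"
    using integral_mono[OF g(1) assms(2) g(3)] m_int by simp
  moreover have "1 \<le> (\<integral>x. M * p x \<partial>R)"
    using p_int assms(9) by simp
  ultimately obtain m2 where m2: "integrable R m2" "\<And>x. g x \<le> m2 x" "\<And>x. m2 x \<le> M * p x"
    "integral\<^sup>L R m2 = 1"
    using exists_integrable_between[of R g "\<lambda>x. M * p x" 1] g(1) assms(3)
    by (auto simp: g_def)
  have m2_nonneg: "\<And>x. 0 \<le> m2 x"
    using g(2) m2(2) by (meson order_trans)
  have "tv_dist X (density R m) (density R m2) \<le> integral\<^sup>L R m - integral\<^sup>L R g"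
    using tv_dist_density_le[OF assms(1,2) m2(1) g(1) assms(4) m2_nonneg g(3) m2(2)] m_int m2(4)
    by simp
  also have "\<dots> \<le> M * tv_dist X \<pi> (density R p)"
    using excess_over_scaled_density_le_tv_dist[of R X m p M \<pi>] assms
    by (simp add: g_def[abs_def])
  finally show ?thesis
    using density_in_N_set[OF assms(1) m2(1) assms(3) m2_nonneg assms(5) m2(3,4)] by blast
qed

theorem lemma2p3:
  fixes X :: "'a measure" and \<pi>1 \<pi>2 \<mu>1 :: "'a measure" and M :: real
  assumes "\<pi>1 \<in> prob_measures X" and "\<pi>2 \<in> prob_measures X"
    and "M \<ge> 1"
    and "\<mu>1 \<in> N_set X \<pi>1 M"
  shows "\<exists>\<mu>2 \<in> N_set X \<pi>2 M. tv_dist X \<mu>1 \<mu>2 \<le> M * tv_dist X \<pi>1 \<pi>2"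
proof -
  have \<pi>1: "prob_space \<pi>1" and \<pi>2: "prob_space \<pi>2" "sets \<pi>2 = sets X"
    and \<mu>1: "prob_space \<mu>1" "sets \<mu>1 = sets X"
    and \<mu>1_le: "\<And>A. A \<in> sets X \<Longrightarrow> measure \<mu>1 A \<le> M * measure \<pi>1 A"
    using assms(1,2,4) by (auto simp: N_set_def prob_measures_def)
  have "finite_measure \<mu>1" "finite_measure \<pi>2"
    using \<mu>1(1) \<pi>2(1) by (simp_all add: prob_space_def)
  then obtain R and m p :: "'a \<Rightarrow> real" where "sets R = sets \<mu>1"
    and "integrable R m" "integrable R p" "\<And>x. 0 \<le> m x" "\<And>x. 0 \<le> p x"
    and "density R m = \<mu>1" "density R p = \<pi>2"
    using common_dominating_real_densities \<mu>1(2) \<pi>2(2) by metis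
  then show ?thesis
    using exists_close_density_in_N_set[of R X m p \<pi>1 M] \<mu>1 \<pi>1 \<pi>2(1) \<mu>1_le assms(3) by simp
qed

end
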